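(* Let $S$ be a $\Gamma$-semiring with zero having a left unity and a right unity, and let $L$ be its left operator semiring. Then the map $\sigma\mapsto\sigma^{+'}$ is an inclusion preserving bijection from the set $FI(S)$ of fuzzy ideals of $S$ onto the set $FI(L)$ of fuzzy ideals of $L$, and it is an isomorphism of the lattices $(FI(S),\oplus,\cap)$ and $(FI(L),\oplus,\cap)$. Likewise, $\sigma\mapsto\sigma^{+'}$ gives a lattice isomorphism, via an inclusion preserving bijection, between the fuzzy right ideals of $S$ and the fuzzy right ideals of $L$.
   Context: A $\Gamma$-semiring: $S$ and $\Gamma$ are additive commutative semigroups with a map $S\times\Gamma\times S\to S$, $(a,\alpha,b)\mapsto a\alpha b$, such that $(a+b)\alpha c=a\alpha c+b\alpha c$, $a\alpha(b+c)=a\alpha b+a\alpha c$, $a(\alpha+\beta)b=a\alpha b+a\beta b$, $a\alpha(b\beta c)=(a\alpha b)\beta c$. With zero: $(S,+)$, $(\Gamma,+)$ are monoids, $0_S\alpha x=0_S=x\alpha0_S$, $x0_\Gamma y=0_S$. Left operator semiring $L$: $F$ is the free additive commutative semigroup on $S\times\Gamma$; $\sum_i(x_i,\alpha_i)\,\rho\,\sum_j(y_j,\beta_j)$ iff $\sum_ix_i\alpha_ia=\sum_jy_j\beta_ja$ for all $a\in S$; $L=F/\rho$, classes written $\sum_i[x_i,\alpha_i]$, multiplication $(\sum_i[x_i,\alpha_i])(\sum_j[y_j,\beta_j])=\sum_{i,j}[x_i\alpha_iy_j,\beta_j]$; its zero is $[0,\gamma]$. A left unity of $S$ is $\sum_i[e_i,\delta_i]\in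 L$ with $\sum_ie_i\delta_ia=a$ for all $a$; a right unity is a finite family $\gamma_j\in\Gamma,f_j\in S$ with $\sum_ja\gamma_jf_j=a$ for all $a$. Fuzzy subset: map into $[0,1]$. A fuzzy right ideal of $S$: fuzzy subset $\mu$, not identically $0$, with $\mu(x+y)\ge\min[\mu(x),\mu(y)]$ and $\mu(x\gamma y)\ge\mu(x)$ for all $x,y\in S,\gamma\in\Gamma$; a fuzzy left ideal: same with $\mu(x\gamma y)\ge\mu(y)$; a fuzzy ideal: both. For the semiring $L$ analogously with $\mu(pq)\ge\mu(p)$ (right), $\mu(pq)\ge\mu(q)$ (left). Convention: all these fuzzy (left/right) ideals satisfy $\mu(0)=1$. For a fuzzy subset $\sigma$ of $S$: $\sigma^{+'}(\sum_i[x_i,\alpha_i])=\inf_{s\in S}\sigma(\sum_ix_i\alpha_is)$. $(\mu_1\oplus\mu_2)(x)=\sup\{\min[\mu_1(u),\mu_2(v)]:x=u+v\}$; $\cap$ is pointwise minimum; inclusion is pointwise $\le$. *)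

theory Defs
  imports Complex_Main "HOL-Library.Multiset"
begin

text \<open>S is the type 'a, Gamma is the type 'g (both additive commutative monoids);
  op x g y stands for x g y.\<close>

definition gamma_semiring_zero :: "('a::comm_monoid_add \<Rightarrow> 'g::comm_monoid_add \<Rightarrow> 'a \<Rightarrow> 'a) \<Rightarrow> bool" where
  "gamma_semiring_zero op \<longleftrightarrow>
     (\<forall>a b c \<alpha>. op (a + b) \<alpha> c = op a \<alpha> c + op b \<alpha> c) \<and>
     (\<forall>a b c \<alpha>. op a \<alpha> (b + c) = op a \<alpha> b + op a \<alpha> c) \<and>
     (\<forall>a b \<alpha> \<beta>. op a (\<alpha> + \<beta>) b = op a \<alpha> b + op a \<beta> b) \<and>
     (\<forall>a b c \<alpha> \<beta>. op a \<alpha> (op b \<beta> c) = op (op a \<alpha> b) \<beta> c) \<and>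
     (\<forall>x \<alpha>. op 0 \<alpha> x = 0 \<and> op x \<alpha> 0 = 0) \<and>
     (\<forall>x y. op x 0 y = 0)"

text \<open>The free additive commutative semigroup on S x Gamma = nonempty finite multisets.\<close>

definition Fset :: "('a \<times> 'g) multiset set" where
  "Fset = {M. M \<noteq> {#}}"

definition opeval :: "('a::comm_monoid_add \<Rightarrow> 'g \<Rightarrow> 'a \<Rightarrow> 'a) \<Rightarrow> ('a \<times> 'g) multiset \<Rightarrow> 'a \<Rightarrow> 'a" where
  "opeval op M a = (\<Sum>p\<in>#M. op (fst p) (snd p) a)"

definition rho :: "('a::comm_monoid_add \<Rightarrow> 'g \<Rightarrow> 'a \<Rightarrow> 'a) \<Rightarrow> (('a \<times> 'g) multiset \<times> ('a \<times> 'g) multiset) set" where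
  "rho op = {(M, N). M \<in> Fset \<and> N \<in> Fset \<and> (\<forall>a. opeval op M a = opeval op N a)}"

definition Lset :: "('a::comm_monoid_add \<Rightarrow> 'g \<Rightarrow> 'a \<Rightarrow> 'a) \<Rightarrow> ('a \<times> 'g) multiset set set" where
  "Lset op = Fset // rho op"

definition Ladd :: "('a::comm_monoid_add \<Rightarrow> 'g \<Rightarrow> 'a \<Rightarrow> 'a) \<Rightarrow> ('a \<times> 'g) multiset set \<Rightarrow> ('a \<times> 'g) multiset set \<Rightarrow> ('a \<times> 'g) multiset set" where
  "Ladd op P Q = rho op `` {M + N | M N. M \<in> P \<and> N \<in> Q}"

definition mulrep :: "('a::comm_monoid_add \<Rightarrow> 'g \<Rightarrow> 'a \<Rightarrow> 'a) \<Rightarrow> ('a \<times> 'g) multiset \<Rightarrow> ('a \<times> 'g) multiset \<Rightarrow> ('a \<times> 'g) multiset" where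
  "mulrep op M N = (\<Sum>p\<in>#M. image_mset (\<lambda>q. (op (fst p) (snd p) (fst q), snd q)) N)"

definition Lmul :: "('a::comm_monoid_add \<Rightarrow> 'g \<Rightarrow> 'a \<Rightarrow> 'a) \<Rightarrow> ('a \<times> 'g) multiset set \<Rightarrow> ('a \<times> 'g) multiset set \<Rightarrow> ('a \<times> 'g) multiset set" where
  "Lmul op P Q = rho op `` {mulrep op M N | M N. M \<in> P \<and> N \<in> Q}"

definition Lzero :: "('a::comm_monoid_add \<Rightarrow> 'g::comm_monoid_add \<Rightarrow> 'a \<Rightarrow> 'a) \<Rightarrow> ('a \<times> 'g) multiset set" where
  "Lzero op = rho op `` {{#(0, 0)#}}"

definition has_left_unity :: "('a::comm_monoid_add \<Rightarrow> 'g \<Rightarrow> 'a \<Rightarrow> 'a) \<Rightarrow> bool" where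
  "has_left_unity op \<longleftrightarrow> (\<exists>E \<in> Lset op. \<forall>M\<in>E. \<forall>a. opeval op M a = a)"

definition has_right_unity :: "('a::comm_monoid_add \<Rightarrow> 'g \<Rightarrow> 'a \<Rightarrow> 'a) \<Rightarrow> bool" where
  "has_right_unity op \<longleftrightarrow> (\<exists>fs :: ('g \<times> 'a) list. \<forall>a. (\<Sum>p\<leftarrow>fs. op a (fst p) (snd p)) = a)"

definition fuzzy_right_ideal_S :: "('a::comm_monoid_add \<Rightarrow> 'g \<Rightarrow> 'a \<Rightarrow> 'a) \<Rightarrow> ('a \<Rightarrow> real) \<Rightarrow> bool" where
  "fuzzy_right_ideal_S op \<mu> \<longleftrightarrow>
     (\<forall>x. 0 \<le> \<mu> x \<and> \<mu> x \<le> 1) \<and> (\<exists>x. \<mu> x \<noteq> 0) \<and> \<mu> 0 = 1 \<and>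
     (\<forall>x y. \<mu> (x + y) \<ge> min (\<mu> x) (\<mu> y)) \<and>
     (\<forall>x \<gamma> y. \<mu> (op x \<gamma> y) \<ge> \<mu> x)"

definition fuzzy_left_ideal_S :: "('a::comm_monoid_add \<Rightarrow> 'g \<Rightarrow> 'a \<Rightarrow> 'a) \<Rightarrow> ('a \<Rightarrow> real) \<Rightarrow> bool" where
  "fuzzy_left_ideal_S op \<mu> \<longleftrightarrow>
     (\<forall>x. 0 \<le> \<mu> x \<and> \<mu> x \<le> 1) \<and> (\<exists>x. \<mu> x \<noteq> 0) \<and> \<mu> 0 = 1 \<and>
     (\<forall>x y. \<mu> (x + y) \<ge> min (\<mu> x) (\<mu> y)) \<and>
     (\<forall>x \<gamma> y. \<mu> (op x \<gamma> y) \<ge> \<mu> y)"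

definition fuzzy_ideal_S :: "('a::comm_monoid_add \<Rightarrow> 'g \<Rightarrow> 'a \<Rightarrow> 'a) \<Rightarrow> ('a \<Rightarrow> real) \<Rightarrow> bool" where
  "fuzzy_ideal_S op \<mu> \<longleftrightarrow> fuzzy_right_ideal_S op \<mu> \<and> fuzzy_left_ideal_S op \<mu>"

text \<open>Fuzzy subsets of L are functions on the type of classes that vanish outside L.\<close>

definition fuzzy_right_ideal_L :: "('a::comm_monoid_add \<Rightarrow> 'g::comm_monoid_add \<Rightarrow> 'a \<Rightarrow> 'a) \<Rightarrow> (('a \<times> 'g) multiset set \<Rightarrow> real) \<Rightarrow> bool" where
  "fuzzy_right_ideal_L op \<mu> \<longleftrightarrow>
     (\<forall>X. X \<notin> Lset op \<longrightarrow> \<mu> X = 0) \<and>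
     (\<forall>X\<in>Lset op. 0 \<le> \<mu> X \<and> \<mu> X \<le> 1) \<and> (\<exists>X\<in>Lset op. \<mu> X \<noteq> 0) \<and> \<mu> (Lzero op) = 1 \<and>
     (\<forall>X\<in>Lset op. \<forall>Y\<in>Lset op. \<mu> (Ladd op X Y) \<ge> min (\<mu> X) (\<mu> Y)) \<and>
     (\<forall>X\<in>Lset op. \<forall>Y\<in>Lset op. \<mu> (Lmul op X Y) \<ge> \<mu> X)"

definition fuzzy_left_ideal_L :: "('a::comm_monoid_add \<Rightarrow> 'g::comm_monoid_add \<Rightarrow> 'a \<Rightarrow> 'a) \<Rightarrow> (('a \<times> 'g) multiset set \<Rightarrow> real) \<Rightarrow> bool" where
  "fuzzy_left_ideal_L op \<mu> \<longleftrightarrow>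
     (\<forall>X. X \<notin> Lset op \<longrightarrow> \<mu> X = 0) \<and>
     (\<forall>X\<in>Lset op. 0 \<le> \<mu> X \<and> \<mu> X \<le> 1) \<and> (\<exists>X\<in>Lset op. \<mu> X \<noteq> 0) \<and> \<mu> (Lzero op) = 1 \<and>
     (\<forall>X\<in>Lset op. \<forall>Y\<in>Lset op. \<mu> (Ladd op X Y) \<ge> min (\<mu> X) (\<mu> Y)) \<and>
     (\<forall>X\<in>Lset op. \<forall>Y\<in>Lset op. \<mu> (Lmul op X Y) \<ge> \<mu> Y)"

definition fuzzy_ideal_L :: "('a::comm_monoid_add \<Rightarrow> 'g::comm_monoid_add \<Rightarrow> 'a \<Rightarrow> 'a) \<Rightarrow> (('a \<times> 'g) multiset set \<Rightarrow> real) \<Rightarrow> bool" where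
  "fuzzy_ideal_L op \<mu> \<longleftrightarrow> fuzzy_right_ideal_L op \<mu> \<and> fuzzy_left_ideal_L op \<mu>"

definition sigma_plus :: "('a::comm_monoid_add \<Rightarrow> 'g \<Rightarrow> 'a \<Rightarrow> 'a) \<Rightarrow> ('a \<Rightarrow> real) \<Rightarrow> ('a \<times> 'g) multiset set \<Rightarrow> real" where
  "sigma_plus op \<sigma> X = (if X \<in> Lset op then (INF s. \<sigma> (opeval op (SOME M. M \<in> X) s)) else 0)"

definition fsum_S :: "('a::comm_monoid_add \<Rightarrow> real) \<Rightarrow> ('a \<Rightarrow> real) \<Rightarrow> 'a \<Rightarrow> real" where
  "fsum_S \<mu>1 \<mu>2 x = (SUP uv \<in> {(u, v). x = u + v}. min (\<mu>1 (fst uv)) (\<mu>2 (snd uv)))"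

definition fsum_L :: "('a::comm_monoid_add \<Rightarrow> 'g::comm_monoid_add \<Rightarrow> 'a \<Rightarrow> 'a) \<Rightarrow> (('a \<times> 'g) multiset set \<Rightarrow> real) \<Rightarrow> (('a \<times> 'g) multiset set \<Rightarrow> real) \<Rightarrow> ('a \<times> 'g) multiset set \<Rightarrow> real" where
  "fsum_L op \<mu>1 \<mu>2 X = (if X \<in> Lset op then
      (SUP UV \<in> {(U, V). U \<in> Lset op \<and> V \<in> Lset op \<and> X = Ladd op U V}. min (\<mu>1 (fst UV)) (\<mu>2 (snd UV)))
    else 0)"

definition fint :: "('b \<Rightarrow> real) \<Rightarrow> ('b \<Rightarrow> real) \<Rightarrow> 'b \<Rightarrow> real" where
  "fint \<mu>1 \<mu>2 x = min (\<mu>1 x) (\<mu>2 x)"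

end

theory Submission
  imports Defs
begin

text \<open>By the definition of \<open>\<rho>\<close>, an element \<open>X\<close> of \<open>L\<close> is determined by the additive map
  \<open>s \<mapsto> \<Sum>x\<^sub>i\<alpha>\<^sub>is\<close> by which it acts on \<open>S\<close>, and \<open>\<sigma>\<^sup>+\<^sup>'(X)\<close> is the infimum of \<open>\<sigma>\<close> over the
  image of this map. The candidate inverse sends \<open>\<mu>\<close> to \<open>a \<mapsto> inf\<^sub>\<gamma> \<mu>[a,\<gamma>]\<close>.
  A right unity makes it a left inverse on fuzzy right ideals, because
  \<open>\<sigma>(a) = \<sigma>(\<Sum>a\<gamma>\<^sub>jf\<^sub>j) \<ge> min\<^sub>j \<sigma>(a\<gamma>\<^sub>jf\<^sub>j)\<close>. A left unity \<open>\<Sum>[e\<^sub>i,\<delta>\<^sub>i]\<close> writes every \<open>X\<close> as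
  \<open>\<Sum>[Xe\<^sub>i,\<delta>\<^sub>i]\<close>, which makes it a right inverse, and it also lets a pointwise splitting
  \<open>Xe\<^sub>i = u\<^sub>i + v\<^sub>i\<close> be lifted to a splitting \<open>X = \<Sum>[u\<^sub>i,\<delta>\<^sub>i] + \<Sum>[v\<^sub>i,\<delta>\<^sub>i]\<close> in \<open>L\<close>, which is
  what is needed for \<open>\<oplus>\<close>. Both maps are monotone, so the bijection is an order, hence
  lattice, isomorphism.\<close>

definition fuzzy_submonoid :: "('a::comm_monoid_add \<Rightarrow> real) \<Rightarrow> bool" where
  "fuzzy_submonoid \<sigma> \<longleftrightarrow>
     (\<forall>x. 0 \<le> \<sigma> x \<and> \<sigma> x \<le> 1) \<and> \<sigma> 0 = 1 \<and> (\<forall>x y. min (\<sigma> x) (\<sigma> y) \<le> \<sigma> (x + y))"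

lemma fuzzy_submonoid_sum_mset_ge:
  assumes "fuzzy_submonoid \<sigma>" "t \<le> 1" "\<forall>x\<in>#N. t \<le> \<sigma> (f x)"
  shows "t \<le> \<sigma> (\<Sum>x\<in>#N. f x)"
  using assms(3)
proof (induction N)
  case empty
  then show ?case using assms(1,2) by (simp add: fuzzy_submonoid_def)
next
  case (add x N)
  then have "t \<le> min (\<sigma> (f x)) (\<sigma> (\<Sum>x\<in>#N. f x))" by simp
  also have "\<dots> \<le> \<sigma> (f x + (\<Sum>x\<in>#N. f x))" using assms(1) by (simp add: fuzzy_submonoid_def)
  finally show ?case by simp
qed

lemma fuzzy_submonoid_sum_list_ge:
  assumes "fuzzy_submonoid \<sigma>" "t \<le> 1" "\<forall>x\<in>set xs. t \<le> \<sigma> (f x)"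
  shows "t \<le> \<sigma> (\<Sum>x\<leftarrow>xs. f x)"
  using fuzzy_submonoid_sum_mset_ge[OF assms(1,2), of "mset xs" f] assms(3)
  by (metis mset_map sum_mset_sum_list set_mset_mset)

lemma fsum_S_ge:
  assumes "\<And>x. \<sigma>1 x \<le> 1" "x = u + v"
  shows "min (\<sigma>1 u) (\<sigma>2 v) \<le> fsum_S \<sigma>1 \<sigma>2 x"
proof -
  have "(u, v) \<in> {(u, v). x = u + v}" using assms(2) by simp
  then have "min (\<sigma>1 (fst (u, v))) (\<sigma>2 (snd (u, v))) \<le> fsum_S \<sigma>1 \<sigma>2 x"
    unfolding fsum_S_def
    by (rule cSUP_upper) (use assms(1) in \<open>auto intro!: bdd_aboveI[of _ 1] simp: min_le_iff_disj\<close>)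
  then show ?thesis by simp
qed

lemma fsum_S_le_one:
  assumes "\<And>x. \<sigma>1 x \<le> 1"
  shows "fsum_S \<sigma>1 \<sigma>2 x \<le> 1"
proof -
  have "(x, 0) \<in> {(u, v). x = u + v}" by simp
  then have "{(u, v). x = u + v} \<noteq> {}" by blast
  then show ?thesis
    unfolding fsum_S_def by (rule cSUP_least) (use assms in \<open>auto simp: min_le_iff_disj\<close>)
qed

lemma less_fsum_S_obtains:
  assumes "\<And>x. \<sigma>1 x \<le> 1" "t < fsum_S \<sigma>1 \<sigma>2 x"
  shows "\<exists>u v. x = u + v \<and> t < min (\<sigma>1 u) (\<sigma>2 v)"
proof -
  have "(x, 0) \<in> {(u, v). x = u + v}" by simp
  then have ne: "{(u, v). x = u + v} \<noteq> {}" by blast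
  have bdd: "bdd_above ((\<lambda>uv. min (\<sigma>1 (fst uv)) (\<sigma>2 (snd uv))) ` {(u, v). x = u + v})"
    using assms(1) by (auto intro!: bdd_aboveI[of _ 1] simp: min_le_iff_disj)
  have "\<exists>uv\<in>{(u, v). x = u + v}. t < min (\<sigma>1 (fst uv)) (\<sigma>2 (snd uv))"
    using assms(2) unfolding fsum_S_def less_cSUP_iff[OF ne bdd] .
  then show ?thesis by auto
qed

lemma Fset_add: "M \<in> Fset \<Longrightarrow> M + N \<in> Fset"
  by (simp add: Fset_def)

lemma Fset_single [simp]: "{#p#} \<in> Fset"
  by (simp add: Fset_def)

lemma Fset_image_mset: "N \<in> Fset \<Longrightarrow> image_mset f N \<in> Fset"
  by (simp add: Fset_def)

locale gamma_semiring =
  fixes op :: "'a::comm_monoid_add \<Rightarrow> 'g::comm_monoid_add \<Rightarrow> 'a \<Rightarrow> 'a"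
  assumes gamma_semiring_zero: "gamma_semiring_zero op"
begin

lemma op_add_left: "op (a + b) \<gamma> c = op a \<gamma> c + op b \<gamma> c"
  using gamma_semiring_zero unfolding gamma_semiring_zero_def by simp

lemma op_add_right: "op a \<gamma> (b + c) = op a \<gamma> b + op a \<gamma> c"
  using gamma_semiring_zero unfolding gamma_semiring_zero_def by simp

lemma op_assoc: "op a \<gamma> (op b \<delta> c) = op (op a \<gamma> b) \<delta> c"
  using gamma_semiring_zero unfolding gamma_semiring_zero_def by simp

lemma op_zero_left [simp]: "op 0 \<gamma> x = 0"
  using gamma_semiring_zero unfolding gamma_semiring_zero_def by simp

lemma op_zero_right [simp]: "op x \<gamma> 0 = 0"
  using gamma_semiring_zero unfolding gamma_semiring_zero_def by simp

lemma op_sum_mset_left: "op (\<Sum>q\<in>#N. f q) \<gamma> c = (\<Sum>q\<in>#N. op (f q) \<gamma> c)"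
  by (induction N) (simp_all add: op_add_left)

lemma op_sum_mset_right: "op a \<gamma> (\<Sum>q\<in>#N. f q) = (\<Sum>q\<in>#N. op a \<gamma> (f q))"
  by (induction N) (simp_all add: op_add_right)

lemma opeval_add: "opeval op (M + N) = (\<lambda>s. opeval op M s + opeval op N s)"
  by (simp add: opeval_def fun_eq_iff)

lemma opeval_mulrep: "opeval op (mulrep op M N) = opeval op M \<circ> opeval op N"
proof (induction M)
  case empty
  then show ?case by (simp add: mulrep_def opeval_def fun_eq_iff)
next
  case (add p M)
  have "opeval op (image_mset (\<lambda>q. (op (fst p) (snd p) (fst q), snd q)) N) s
      = op (fst p) (snd p) (opeval op N s)" for s
    by (simp add: opeval_def op_sum_mset_right op_assoc multiset.map_comp comp_def)
  with add show ?case by (simp add: mulrep_def opeval_add opeval_def fun_eq_iff)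
qed

lemma Fset_mulrep: "M \<in> Fset \<Longrightarrow> N \<in> Fset \<Longrightarrow> mulrep op M N \<in> Fset"
  by (cases M) (simp_all add: Fset_def mulrep_def)

subsection \<open>Elements of the left operator semiring as operators on S\<close>

definition lclass :: "('a \<times> 'g) multiset \<Rightarrow> ('a \<times> 'g) multiset set" where
  "lclass M = rho op `` {M}"

text \<open>The same choice of representative as in \<open>sigma_plus\<close>; on \<open>Lset op\<close> it is
  irrelevant by \<open>act_lclass\<close>.\<close>
definition act :: "('a \<times> 'g) multiset set \<Rightarrow> 'a \<Rightarrow> 'a" where
  "act X = opeval op (SOME M. M \<in> X)"

definition gen :: "'a \<Rightarrow> 'g \<Rightarrow> ('a \<times> 'g) multiset set" where
  "gen a \<gamma> = lclass {#(a, \<gamma>)#}"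

lemma mem_lclass: "N \<in> lclass M \<longleftrightarrow> M \<in> Fset \<and> N \<in> Fset \<and> opeval op M = opeval op N"
  by (auto simp: lclass_def rho_def fun_eq_iff)

lemma Image_rho_iff: "Z \<in> rho op `` A \<longleftrightarrow> (\<exists>M\<in>A. Z \<in> lclass M)"
  by (auto simp: lclass_def)

lemma Lset_iff: "X \<in> Lset op \<longleftrightarrow> (\<exists>M\<in>Fset. X = lclass M)"
  unfolding Lset_def quotient_def lclass_def by simp

lemma lclass_in_Lset: "M \<in> Fset \<Longrightarrow> lclass M \<in> Lset op"
  by (auto simp: Lset_iff)

lemma act_lclass:
  assumes "M \<in> Fset"
  shows "act (lclass M) = opeval op M"
proof -
  define N where "N = (SOME N. N \<in> lclass M)"
  have "M \<in> lclass M" using assms by (simp add: mem_lclass)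
  then have "N \<in> lclass M" unfolding N_def by (rule someI)
  then show ?thesis unfolding act_def N_def[symmetric] by (simp add: mem_lclass)
qed

lemma LsetE:
  assumes "X \<in> Lset op"
  obtains M where "M \<in> Fset" "X = lclass M" "act X = opeval op M"
  using assms by (auto simp: Lset_iff act_lclass)

lemma Lset_act_inject:
  assumes "X \<in> Lset op" "Y \<in> Lset op" "act X = act Y"
  shows "X = Y"
proof -
  obtain M where M: "M \<in> Fset" "X = lclass M" "act X = opeval op M" using assms(1) by (rule LsetE)
  obtain N where N: "N \<in> Fset" "Y = lclass N" "act Y = opeval op N" using assms(2) by (rule LsetE)
  show ?thesis using M N assms(3) by (auto simp: mem_lclass)
qed

lemma rho_Image_compatible:
  assumes M: "M \<in> Fset" and N: "N \<in> Fset"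
    and closed: "\<And>M N. M \<in> Fset \<Longrightarrow> N \<in> Fset \<Longrightarrow> f M N \<in> Fset"
    and compat: "\<And>M N. opeval op (f M N) = F (opeval op M) (opeval op N)"
  shows "rho op `` {f M' N' |M' N'. M' \<in> lclass M \<and> N' \<in> lclass N} = lclass (f M N)"
proof (rule set_eqI)
  fix Z
  have "M \<in> lclass M" "N \<in> lclass N" using M N by (simp_all add: mem_lclass)
  moreover have "Z \<in> lclass (f M N)"
    if "M' \<in> lclass M" "N' \<in> lclass N" "Z \<in> lclass (f M' N')" for M' N'
    using that closed[OF M N] by (auto simp: mem_lclass compat)
  ultimately show "Z \<in> rho op `` {f M' N' |M' N'. M' \<in> lclass M \<and> N' \<in> lclass N}
      \<longleftrightarrow> Z \<in> lclass (f M N)"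
    unfolding Image_rho_iff by blast
qed

lemma Ladd_lclass:
  assumes "M \<in> Fset" "N \<in> Fset"
  shows "Ladd op (lclass M) (lclass N) = lclass (M + N)"
  unfolding Ladd_def
  by (rule rho_Image_compatible[where F = "\<lambda>g h s. g s + h s"])
     (simp_all add: assms Fset_add opeval_add)

lemma Lmul_lclass:
  assumes "M \<in> Fset" "N \<in> Fset"
  shows "Lmul op (lclass M) (lclass N) = lclass (mulrep op M N)"
  unfolding Lmul_def
  by (rule rho_Image_compatible[where F = "(\<circ>)"]) (simp_all add: assms Fset_mulrep opeval_mulrep)

lemma Ladd_in_Lset: "X \<in> Lset op \<Longrightarrow> Y \<in> Lset op \<Longrightarrow> Ladd op X Y \<in> Lset op"
  by (auto simp: Lset_iff Ladd_lclass Fset_add)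

lemma act_Ladd:
  assumes "X \<in> Lset op" "Y \<in> Lset op"
  shows "act (Ladd op X Y) = (\<lambda>s. act X s + act Y s)"
proof -
  obtain M where M: "M \<in> Fset" "X = lclass M" "act X = opeval op M" using assms(1) by (rule LsetE)
  obtain N where N: "N \<in> Fset" "Y = lclass N" "act Y = opeval op N" using assms(2) by (rule LsetE)
  show ?thesis using M N by (simp add: Ladd_lclass act_lclass Fset_add opeval_add)
qed

lemma Lmul_in_Lset: "X \<in> Lset op \<Longrightarrow> Y \<in> Lset op \<Longrightarrow> Lmul op X Y \<in> Lset op"
  by (auto simp: Lset_iff Lmul_lclass Fset_mulrep)

lemma act_Lmul:
  assumes "X \<in> Lset op" "Y \<in> Lset op"
  shows "act (Lmul op X Y) = act X \<circ> act Y"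
proof -
  obtain M where M: "M \<in> Fset" "X = lclass M" "act X = opeval op M" using assms(1) by (rule LsetE)
  obtain N where N: "N \<in> Fset" "Y = lclass N" "act Y = opeval op N" using assms(2) by (rule LsetE)
  show ?thesis using M N by (simp add: Lmul_lclass act_lclass Fset_mulrep opeval_mulrep)
qed

lemma Lzero_in_Lset: "Lzero op \<in> Lset op"
  by (simp add: Lzero_def lclass_in_Lset flip: lclass_def)

lemma act_Lzero: "act (Lzero op) = (\<lambda>s. 0)"
  by (simp add: Lzero_def act_lclass opeval_def fun_eq_iff flip: lclass_def)

lemma gen_in_Lset: "gen a \<gamma> \<in> Lset op"
  by (simp add: gen_def lclass_in_Lset)

lemma act_gen: "act (gen a \<gamma>) = op a \<gamma>"
  by (simp add: gen_def act_lclass opeval_def fun_eq_iff)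

lemma act_lclass_image:
  assumes "N \<in> Fset"
  shows "act (lclass (image_mset (\<lambda>p. (f p, snd p)) N)) = (\<lambda>s. \<Sum>p\<in>#N. op (f p) (snd p) s)"
  by (simp add: assms Fset_image_mset act_lclass opeval_def multiset.map_comp comp_def fun_eq_iff)

lemma act_op:
  assumes "X \<in> Lset op"
  shows "act X (op e \<delta> s) = op (act X e) \<delta> s"
  using assms by (rule LsetE) (simp add: opeval_def op_sum_mset_left op_assoc)

lemma act_add:
  assumes "X \<in> Lset op"
  shows "act X (a + b) = act X a + act X b"
  using assms by (rule LsetE) (simp add: opeval_def op_add_right sum_mset.distrib)

lemma act_zero:
  assumes "X \<in> Lset op"
  shows "act X 0 = 0"
  using assms by (rule LsetE) (simp add: opeval_def)

lemma act_sum_mset: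
  assumes "X \<in> Lset op"
  shows "act X (\<Sum>p\<in>#N. f p) = (\<Sum>p\<in>#N. act X (f p))"
  by (induction N) (simp_all add: act_add[OF assms] act_zero[OF assms])

lemma Ladd_Lzero: "X \<in> Lset op \<Longrightarrow> Ladd op X (Lzero op) = X"
  by (rule Lset_act_inject)
     (simp_all add: Ladd_in_Lset Lzero_in_Lset act_Ladd act_Lzero)

lemma lclass_image_add:
  assumes "N \<in> Fset"
  shows "lclass (image_mset (\<lambda>p. (f p + g p, snd p)) N)
       = Ladd op (lclass (image_mset (\<lambda>p. (f p, snd p)) N)) (lclass (image_mset (\<lambda>p. (g p, snd p)) N))"
  by (rule Lset_act_inject)
     (simp_all add: assms Fset_image_mset lclass_in_Lset Ladd_in_Lset act_Ladd act_lclass_image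
        op_add_left sum_mset.distrib)

subsection \<open>The map \<open>\<sigma> \<mapsto> \<sigma>\<^sup>+\<^sup>'\<close>\<close>

lemma sigma_plus_Lset: "X \<in> Lset op \<Longrightarrow> sigma_plus op \<sigma> X = (INF s. \<sigma> (act X s))"
  by (simp add: sigma_plus_def act_def)

lemma sigma_plus_outside: "X \<notin> Lset op \<Longrightarrow> sigma_plus op \<sigma> X = 0"
  by (simp add: sigma_plus_def)

lemma sigma_plus_le:
  assumes "\<And>x. 0 \<le> \<sigma> x" "X \<in> Lset op"
  shows "sigma_plus op \<sigma> X \<le> \<sigma> (act X s)"
  unfolding sigma_plus_Lset[OF assms(2)]
  by (rule cINF_lower) (auto intro!: bdd_belowI[of _ 0] assms(1))

lemma sigma_plus_greatest:
  assumes "X \<in> Lset op" "\<And>s. t \<le> \<sigma> (act X s)"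
  shows "t \<le> sigma_plus op \<sigma> X"
  unfolding sigma_plus_Lset[OF assms(1)] by (rule cINF_greatest) (auto intro: assms(2))

lemma fuzzy_right_ideal_S_submonoid: "fuzzy_right_ideal_S op \<sigma> \<Longrightarrow> fuzzy_submonoid \<sigma>"
  by (simp add: fuzzy_right_ideal_S_def fuzzy_submonoid_def)

lemma fuzzy_left_ideal_S_submonoid: "fuzzy_left_ideal_S op \<sigma> \<Longrightarrow> fuzzy_submonoid \<sigma>"
  by (simp add: fuzzy_left_ideal_S_def fuzzy_submonoid_def)

lemma sigma_plus_fuzzy_submonoid:
  assumes "fuzzy_submonoid \<sigma>"
  shows "(\<forall>X. X \<notin> Lset op \<longrightarrow> sigma_plus op \<sigma> X = 0) \<and>
     (\<forall>X\<in>Lset op. 0 \<le> sigma_plus op \<sigma> X \<and> sigma_plus op \<sigma> X \<le> 1) \<and>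
     (\<exists>X\<in>Lset op. sigma_plus op \<sigma> X \<noteq> 0) \<and> sigma_plus op \<sigma> (Lzero op) = 1 \<and>
     (\<forall>X\<in>Lset op. \<forall>Y\<in>Lset op.
        min (sigma_plus op \<sigma> X) (sigma_plus op \<sigma> Y) \<le> sigma_plus op \<sigma> (Ladd op X Y))"
proof -
  have \<sigma>: "\<And>x. 0 \<le> \<sigma> x" "\<sigma> 0 = 1" "\<And>x y. min (\<sigma> x) (\<sigma> y) \<le> \<sigma> (x + y)"
    using assms by (auto simp: fuzzy_submonoid_def)
  have bounds: "0 \<le> sigma_plus op \<sigma> X \<and> sigma_plus op \<sigma> X \<le> 1" if X: "X \<in> Lset op" for X
  proof
    show "0 \<le> sigma_plus op \<sigma> X" by (rule sigma_plus_greatest[OF X]) (rule \<sigma>(1))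
    show "sigma_plus op \<sigma> X \<le> 1"
      using sigma_plus_le[of \<sigma> X 0, OF \<sigma>(1) X] by (simp add: act_zero[OF X] \<sigma>(2))
  qed
  have zero: "sigma_plus op \<sigma> (Lzero op) = 1"
    using bounds[OF Lzero_in_Lset] sigma_plus_greatest[OF Lzero_in_Lset, of 1 \<sigma>]
    by (simp add: act_Lzero \<sigma>(2))
  have "min (sigma_plus op \<sigma> X) (sigma_plus op \<sigma> Y) \<le> sigma_plus op \<sigma> (Ladd op X Y)"
    if X: "X \<in> Lset op" and Y: "Y \<in> Lset op" for X Y
  proof (rule sigma_plus_greatest[OF Ladd_in_Lset[OF X Y]])
    fix s
    have "min (sigma_plus op \<sigma> X) (sigma_plus op \<sigma> Y) \<le> min (\<sigma> (act X s)) (\<sigma> (act Y s))"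
      using sigma_plus_le[OF \<sigma>(1) X] sigma_plus_le[OF \<sigma>(1) Y] by (rule min.mono)
    also have "\<dots> \<le> \<sigma> (act (Ladd op X Y) s)" by (simp add: act_Ladd X Y \<sigma>(3))
    finally show "min (sigma_plus op \<sigma> X) (sigma_plus op \<sigma> Y) \<le> \<sigma> (act (Ladd op X Y) s)" .
  qed
  then show ?thesis using bounds zero Lzero_in_Lset by (force simp: sigma_plus_outside)
qed

lemma fuzzy_right_ideal_L_sigma_plus:
  assumes "fuzzy_right_ideal_S op \<sigma>"
  shows "fuzzy_right_ideal_L op (sigma_plus op \<sigma>)"
proof -
  have \<sigma>: "\<And>x. 0 \<le> \<sigma> x" "\<And>x \<gamma> y. \<sigma> x \<le> \<sigma> (op x \<gamma> y)"
    using assms by (auto simp: fuzzy_right_ideal_S_def)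
  have "sigma_plus op \<sigma> X \<le> sigma_plus op \<sigma> (Lmul op X Y)"
    if X: "X \<in> Lset op" and Y: "Y \<in> Lset op" for X Y
    by (rule sigma_plus_greatest[OF Lmul_in_Lset[OF X Y]])
       (unfold act_Lmul[OF X Y] comp_apply, rule sigma_plus_le[OF \<sigma>(1) X])
  then show ?thesis
    using sigma_plus_fuzzy_submonoid[OF fuzzy_right_ideal_S_submonoid[OF assms]]
    unfolding fuzzy_right_ideal_L_def by blast
qed

lemma fuzzy_left_ideal_S_act_ge:
  assumes "fuzzy_left_ideal_S op \<sigma>" "X \<in> Lset op"
  shows "\<sigma> t \<le> \<sigma> (act X t)"
proof -
  obtain M where M: "M \<in> Fset" "X = lclass M" "act X = opeval op M" using assms(2) by (rule LsetE)
  have "\<sigma> t \<le> 1" "\<forall>p\<in>#M. \<sigma> t \<le> \<sigma> (op (fst p) (snd p) t)"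
    using assms(1) unfolding fuzzy_left_ideal_S_def by blast+
  then have "\<sigma> t \<le> \<sigma> (\<Sum>p\<in>#M. op (fst p) (snd p) t)"
    by (intro fuzzy_submonoid_sum_mset_ge[OF fuzzy_left_ideal_S_submonoid[OF assms(1)]])
  then show ?thesis using M by (simp add: opeval_def)
qed

lemma fuzzy_left_ideal_L_sigma_plus:
  assumes "fuzzy_left_ideal_S op \<sigma>"
  shows "fuzzy_left_ideal_L op (sigma_plus op \<sigma>)"
proof -
  have \<sigma>: "\<And>x. 0 \<le> \<sigma> x" using assms by (simp add: fuzzy_left_ideal_S_def)
  have "sigma_plus op \<sigma> Y \<le> sigma_plus op \<sigma> (Lmul op X Y)"
    if X: "X \<in> Lset op" and Y: "Y \<in> Lset op" for X Y
  proof (rule sigma_plus_greatest[OF Lmul_in_Lset[OF X Y]])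
    fix s
    have "sigma_plus op \<sigma> Y \<le> \<sigma> (act Y s)" by (rule sigma_plus_le[OF \<sigma> Y])
    also have "\<dots> \<le> \<sigma> (act X (act Y s))" by (rule fuzzy_left_ideal_S_act_ge[OF assms X])
    finally show "sigma_plus op \<sigma> Y \<le> \<sigma> (act (Lmul op X Y) s)" by (simp add: act_Lmul X Y)
  qed
  then show ?thesis
    using sigma_plus_fuzzy_submonoid[OF fuzzy_left_ideal_S_submonoid[OF assms]]
    unfolding fuzzy_left_ideal_L_def by blast
qed

lemma sigma_plus_mono:
  assumes "\<And>x. 0 \<le> \<sigma>1 x" "\<sigma>1 \<le> \<sigma>2"
  shows "sigma_plus op \<sigma>1 \<le> sigma_plus op \<sigma>2"
proof (rule le_funI)
  fix X
  show "sigma_plus op \<sigma>1 X \<le> sigma_plus op \<sigma>2 X"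
  proof (cases "X \<in> Lset op")
    case True
    show ?thesis
    proof (rule sigma_plus_greatest[OF True])
      fix s
      show "sigma_plus op \<sigma>1 X \<le> \<sigma>2 (act X s)"
        using sigma_plus_le[of \<sigma>1 X s, OF assms(1) True] le_funD[OF assms(2)] by (rule order_trans)
    qed
  qed (simp add: sigma_plus_outside)
qed

lemma sigma_plus_fint:
  assumes "\<And>x. 0 \<le> \<sigma>1 x" "\<And>x. 0 \<le> \<sigma>2 x"
  shows "sigma_plus op (fint \<sigma>1 \<sigma>2) = fint (sigma_plus op \<sigma>1) (sigma_plus op \<sigma>2)"
proof
  fix X
  have nonneg: "\<And>x. 0 \<le> fint \<sigma>1 \<sigma>2 x" using assms by (simp add: fint_def)
  show "sigma_plus op (fint \<sigma>1 \<sigma>2) X = fint (sigma_plus op \<sigma>1) (sigma_plus op \<sigma>2) X"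
  proof (cases "X \<in> Lset op")
    case X: True
    have "sigma_plus op (fint \<sigma>1 \<sigma>2) \<le> sigma_plus op \<sigma>1"
      "sigma_plus op (fint \<sigma>1 \<sigma>2) \<le> sigma_plus op \<sigma>2"
      by (rule sigma_plus_mono[OF nonneg], simp add: fint_def le_fun_def)+
    moreover have "min (sigma_plus op \<sigma>1 X) (sigma_plus op \<sigma>2 X) \<le> sigma_plus op (fint \<sigma>1 \<sigma>2) X"
      by (rule sigma_plus_greatest[OF X])
         (unfold fint_def, rule min.mono; rule sigma_plus_le[OF _ X]; fact)
    ultimately show ?thesis unfolding le_fun_def fint_def by (metis antisym min.bounded_iff)
  qed (simp add: sigma_plus_outside fint_def)
qed

lemma sigma_plus_lclass_ge:
  assumes "fuzzy_right_ideal_S op \<sigma>" "N \<in> Fset" "t \<le> 1" "\<forall>q\<in>#N. t \<le> \<sigma> (fst q)"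
  shows "t \<le> sigma_plus op \<sigma> (lclass N)"
proof (rule sigma_plus_greatest[OF lclass_in_Lset[OF assms(2)]])
  fix s
  have "\<forall>q\<in>#N. t \<le> \<sigma> (op (fst q) (snd q) s)"
    using assms(1,4) order_trans unfolding fuzzy_right_ideal_S_def by blast
  then show "t \<le> \<sigma> (act (lclass N) s)"
    using fuzzy_submonoid_sum_mset_ge[OF fuzzy_right_ideal_S_submonoid[OF assms(1)] assms(3)]
    by (simp add: act_lclass assms(2) opeval_def)
qed

subsection \<open>The inverse map\<close>

definition sigma_plus_inv :: "(('a \<times> 'g) multiset set \<Rightarrow> real) \<Rightarrow> 'a \<Rightarrow> real" where
  "sigma_plus_inv \<mu> a = (INF \<gamma>. \<mu> (gen a \<gamma>))"

lemma fuzzy_right_ideal_LD: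
  assumes "fuzzy_right_ideal_L op \<mu>"
  shows "\<And>X. X \<notin> Lset op \<Longrightarrow> \<mu> X = 0" "\<And>X. X \<in> Lset op \<Longrightarrow> 0 \<le> \<mu> X"
    "\<And>X. X \<in> Lset op \<Longrightarrow> \<mu> X \<le> 1" "\<mu> (Lzero op) = 1"
    "\<And>X Y. X \<in> Lset op \<Longrightarrow> Y \<in> Lset op \<Longrightarrow> min (\<mu> X) (\<mu> Y) \<le> \<mu> (Ladd op X Y)"
    "\<And>X Y. X \<in> Lset op \<Longrightarrow> Y \<in> Lset op \<Longrightarrow> \<mu> X \<le> \<mu> (Lmul op X Y)"
  using assms unfolding fuzzy_right_ideal_L_def by blast+

lemma sigma_plus_inv_le:
  assumes "fuzzy_right_ideal_L op \<mu>"
  shows "sigma_plus_inv \<mu> a \<le> \<mu> (gen a \<gamma>)"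
  unfolding sigma_plus_inv_def
  by (rule cINF_lower) (auto intro!: bdd_belowI[of _ 0] fuzzy_right_ideal_LD(2)[OF assms] gen_in_Lset)

lemma sigma_plus_inv_greatest: "(\<And>\<gamma>. t \<le> \<mu> (gen a \<gamma>)) \<Longrightarrow> t \<le> sigma_plus_inv \<mu> a"
  unfolding sigma_plus_inv_def by (rule cINF_greatest) auto

lemma gen_zero: "gen 0 \<gamma> = Lzero op"
  by (rule Lset_act_inject[OF gen_in_Lset Lzero_in_Lset]) (simp add: act_gen act_Lzero fun_eq_iff)

lemma gen_add: "gen (a + b) \<gamma> = Ladd op (gen a \<gamma>) (gen b \<gamma>)"
  by (rule Lset_act_inject[OF gen_in_Lset Ladd_in_Lset[OF gen_in_Lset gen_in_Lset]])
     (simp add: act_gen act_Ladd gen_in_Lset fun_eq_iff op_add_left)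

lemma gen_op: "gen (op a \<gamma> b) \<delta> = Lmul op (gen a \<gamma>) (gen b \<delta>)"
  by (rule Lset_act_inject[OF gen_in_Lset Lmul_in_Lset[OF gen_in_Lset gen_in_Lset]])
     (simp add: act_gen act_Lmul gen_in_Lset fun_eq_iff op_assoc)

lemma gen_act: "X \<in> Lset op \<Longrightarrow> gen (act X s) \<gamma> = Lmul op X (gen s \<gamma>)"
  by (rule Lset_act_inject[OF gen_in_Lset Lmul_in_Lset[OF _ gen_in_Lset]])
     (simp_all add: act_gen act_Lmul gen_in_Lset fun_eq_iff act_op)

lemma fuzzy_right_ideal_L_lclass_ge:
  assumes \<mu>: "fuzzy_right_ideal_L op \<mu>"
  shows "N \<in> Fset \<Longrightarrow> \<forall>q\<in>#N. t \<le> \<mu> (gen (fst q) (snd q)) \<Longrightarrow> t \<le> \<mu> (lclass N)"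
proof (induction N)
  case empty
  then show ?case by (simp add: Fset_def)
next
  case (add q N)
  show ?case
  proof (cases "N = {#}")
    case True
    then show ?thesis using add.prems by (simp add: gen_def)
  next
    case False
    then have N: "N \<in> Fset" by (simp add: Fset_def)
    have "t \<le> min (\<mu> (gen (fst q) (snd q))) (\<mu> (lclass N))" using add N by simp
    also have "\<dots> \<le> \<mu> (Ladd op (gen (fst q) (snd q)) (lclass N))"
      by (rule fuzzy_right_ideal_LD(5)[OF \<mu> gen_in_Lset lclass_in_Lset[OF N]])
    also have "Ladd op (gen (fst q) (snd q)) (lclass N) = lclass (add_mset q N)"
      using Ladd_lclass[OF Fset_single N, of q] by (simp add: gen_def)
    finally show ?thesis .
  qed
qed

lemma fuzzy_right_ideal_S_sigma_plus_inv:
  assumes \<mu>: "fuzzy_right_ideal_L op \<mu>"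
  shows "fuzzy_right_ideal_S op (sigma_plus_inv \<mu>)"
proof -
  note \<mu>D = fuzzy_right_ideal_LD[OF \<mu>]
  have le_one: "sigma_plus_inv \<mu> x \<le> 1" for x
    using sigma_plus_inv_le[OF \<mu>, of x 0] \<mu>D(3)[OF gen_in_Lset[of x 0]] by linarith
  have zero: "sigma_plus_inv \<mu> 0 = 1"
    using le_one[of 0] sigma_plus_inv_greatest[of 1 \<mu> 0] by (simp add: gen_zero \<mu>D(4))
  have add: "min (sigma_plus_inv \<mu> x) (sigma_plus_inv \<mu> y) \<le> sigma_plus_inv \<mu> (x + y)" for x y
  proof (rule sigma_plus_inv_greatest)
    fix \<gamma>
    have "min (sigma_plus_inv \<mu> x) (sigma_plus_inv \<mu> y) \<le> min (\<mu> (gen x \<gamma>)) (\<mu> (gen y \<gamma>))"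
      using sigma_plus_inv_le[OF \<mu>] sigma_plus_inv_le[OF \<mu>] by (rule min.mono)
    also have "\<dots> \<le> \<mu> (gen (x + y) \<gamma>)" unfolding gen_add by (rule \<mu>D(5)[OF gen_in_Lset gen_in_Lset])
    finally show "min (sigma_plus_inv \<mu> x) (sigma_plus_inv \<mu> y) \<le> \<mu> (gen (x + y) \<gamma>)" .
  qed
  have mul: "sigma_plus_inv \<mu> x \<le> sigma_plus_inv \<mu> (op x \<gamma> y)" for x \<gamma> y
  proof (rule sigma_plus_inv_greatest)
    fix \<delta>
    have "sigma_plus_inv \<mu> x \<le> \<mu> (gen x \<gamma>)" by (rule sigma_plus_inv_le[OF \<mu>])
    also have "\<dots> \<le> \<mu> (gen (op x \<gamma> y) \<delta>)" unfolding gen_op by (rule \<mu>D(6)[OF gen_in_Lset gen_in_Lset])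
    finally show "sigma_plus_inv \<mu> x \<le> \<mu> (gen (op x \<gamma> y) \<delta>)" .
  qed
  have "0 \<le> sigma_plus_inv \<mu> x" for x by (rule sigma_plus_inv_greatest) (rule \<mu>D(2)[OF gen_in_Lset])
  moreover have "\<exists>x. sigma_plus_inv \<mu> x \<noteq> 0" using zero by (intro exI[of _ 0]) simp
  ultimately show ?thesis unfolding fuzzy_right_ideal_S_def using le_one zero add mul by blast
qed

lemma fuzzy_left_ideal_S_sigma_plus_inv:
  assumes \<mu>: "fuzzy_right_ideal_L op \<mu>" and \<mu>_left: "fuzzy_left_ideal_L op \<mu>"
  shows "fuzzy_left_ideal_S op (sigma_plus_inv \<mu>)"
proof -
  have "sigma_plus_inv \<mu> y \<le> sigma_plus_inv \<mu> (op x \<gamma> y)" for x \<gamma> y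
  proof (rule sigma_plus_inv_greatest)
    fix \<delta>
    have "sigma_plus_inv \<mu> y \<le> \<mu> (gen y \<delta>)" by (rule sigma_plus_inv_le[OF \<mu>])
    also have "\<dots> \<le> \<mu> (gen (op x \<gamma> y) \<delta>)"
      unfolding gen_op using \<mu>_left gen_in_Lset unfolding fuzzy_left_ideal_L_def by blast
    finally show "sigma_plus_inv \<mu> y \<le> \<mu> (gen (op x \<gamma> y) \<delta>)" .
  qed
  then show ?thesis using fuzzy_right_ideal_S_sigma_plus_inv[OF \<mu>]
    unfolding fuzzy_right_ideal_S_def fuzzy_left_ideal_S_def by blast
qed

lemma sigma_plus_inv_mono:
  assumes "fuzzy_right_ideal_L op \<mu>1" "\<mu>1 \<le> \<mu>2"
  shows "sigma_plus_inv \<mu>1 \<le> sigma_plus_inv \<mu>2"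
  using sigma_plus_inv_le[OF assms(1)] assms(2)
  by (auto intro!: le_funI sigma_plus_inv_greatest intro: order_trans simp: le_fun_def)

lemma sigma_plus_inv_sigma_plus:
  assumes \<sigma>: "fuzzy_right_ideal_S op \<sigma>"
    and right_unity: "\<And>a. (\<Sum>p\<leftarrow>fs. op a (fst p) (snd p)) = a"
  shows "sigma_plus_inv (sigma_plus op \<sigma>) = \<sigma>"
proof
  fix a
  have \<sigma>L: "fuzzy_right_ideal_L op (sigma_plus op \<sigma>)" by (rule fuzzy_right_ideal_L_sigma_plus[OF \<sigma>])
  have \<sigma>D: "\<And>x. 0 \<le> \<sigma> x" "\<And>x \<gamma> y. \<sigma> x \<le> \<sigma> (op x \<gamma> y)"
    using \<sigma> by (auto simp: fuzzy_right_ideal_S_def)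
  let ?t = "sigma_plus_inv (sigma_plus op \<sigma>) a"
  have "?t \<le> 1"
    using sigma_plus_inv_le[OF \<sigma>L, of a 0] fuzzy_right_ideal_LD(3)[OF \<sigma>L gen_in_Lset[of a 0]] by linarith
  moreover have "?t \<le> \<sigma> (op a \<gamma> f)" for \<gamma> f
    using sigma_plus_inv_le[OF \<sigma>L, of a \<gamma>] sigma_plus_le[of \<sigma> "gen a \<gamma>" f, OF \<sigma>D(1) gen_in_Lset]
    by (simp add: act_gen)
  ultimately have "?t \<le> \<sigma> (\<Sum>p\<leftarrow>fs. op a (fst p) (snd p))"
    by (intro fuzzy_submonoid_sum_list_ge[OF fuzzy_right_ideal_S_submonoid[OF \<sigma>]]) auto
  moreover have "\<sigma> a \<le> ?t"
    by (intro sigma_plus_inv_greatest sigma_plus_greatest[OF gen_in_Lset]) (simp add: act_gen \<sigma>D(2))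
  ultimately show "?t = \<sigma> a" by (simp add: right_unity)
qed

lemma sigma_plus_le_iff:
  assumes "\<And>a. (\<Sum>p\<leftarrow>fs. op a (fst p) (snd p)) = a"
    and \<sigma>1: "fuzzy_right_ideal_S op \<sigma>1" and \<sigma>2: "fuzzy_right_ideal_S op \<sigma>2"
  shows "\<sigma>1 \<le> \<sigma>2 \<longleftrightarrow> sigma_plus op \<sigma>1 \<le> sigma_plus op \<sigma>2"
proof
  show "\<sigma>1 \<le> \<sigma>2 \<Longrightarrow> sigma_plus op \<sigma>1 \<le> sigma_plus op \<sigma>2"
    using \<sigma>1 by (intro sigma_plus_mono) (auto simp: fuzzy_right_ideal_S_def)
  assume "sigma_plus op \<sigma>1 \<le> sigma_plus op \<sigma>2"
  then have "sigma_plus_inv (sigma_plus op \<sigma>1) \<le> sigma_plus_inv (sigma_plus op \<sigma>2)"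
    by (rule sigma_plus_inv_mono[OF fuzzy_right_ideal_L_sigma_plus[OF \<sigma>1]])
  then show "\<sigma>1 \<le> \<sigma>2" by (simp add: sigma_plus_inv_sigma_plus[OF _ assms(1)] \<sigma>1 \<sigma>2)
qed

lemma fsum_L_ge:
  assumes "\<And>X. X \<in> Lset op \<Longrightarrow> \<mu>1 X \<le> 1" "U \<in> Lset op" "V \<in> Lset op"
  shows "min (\<mu>1 U) (\<mu>2 V) \<le> fsum_L op \<mu>1 \<mu>2 (Ladd op U V)"
proof -
  have "min (\<mu>1 (fst (U, V))) (\<mu>2 (snd (U, V)))
      \<le> (SUP UV \<in> {(U', V'). U' \<in> Lset op \<and> V' \<in> Lset op \<and> Ladd op U V = Ladd op U' V'}.
            min (\<mu>1 (fst UV)) (\<mu>2 (snd UV)))"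
    by (rule cSUP_upper) (use assms in \<open>auto intro!: bdd_aboveI[of _ 1] simp: min_le_iff_disj\<close>)
  then show ?thesis using assms(2,3) by (simp add: fsum_L_def Ladd_in_Lset)
qed

lemma fsum_L_least:
  assumes "X \<in> Lset op"
    "\<And>U V. U \<in> Lset op \<Longrightarrow> V \<in> Lset op \<Longrightarrow> X = Ladd op U V \<Longrightarrow> min (\<mu>1 U) (\<mu>2 V) \<le> t"
  shows "fsum_L op \<mu>1 \<mu>2 X \<le> t"
proof -
  have "(X, Lzero op) \<in> {(U, V). U \<in> Lset op \<and> V \<in> Lset op \<and> X = Ladd op U V}"
    using assms(1) by (simp add: Lzero_in_Lset Ladd_Lzero)
  then have "{(U, V). U \<in> Lset op \<and> V \<in> Lset op \<and> X = Ladd op U V} \<noteq> {}" by blast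
  then show ?thesis
    unfolding fsum_L_def using assms(1) by (simp, intro cSUP_least) (use assms(2) in auto)
qed

lemma fsum_L_le_sigma_plus_fsum_S:
  assumes \<sigma>1: "fuzzy_right_ideal_S op \<sigma>1" and \<sigma>2: "fuzzy_right_ideal_S op \<sigma>2"
    and X: "X \<in> Lset op"
  shows "fsum_L op (sigma_plus op \<sigma>1) (sigma_plus op \<sigma>2) X \<le> sigma_plus op (fsum_S \<sigma>1 \<sigma>2) X"
proof (rule fsum_L_least[OF X])
  fix U V assume U: "U \<in> Lset op" and V: "V \<in> Lset op" and XUV: "X = Ladd op U V"
  have \<sigma>D: "\<And>x. 0 \<le> \<sigma>1 x" "\<And>x. \<sigma>1 x \<le> 1" "\<And>x. 0 \<le> \<sigma>2 x"
    using \<sigma>1 \<sigma>2 by (auto simp: fuzzy_right_ideal_S_def)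
  show "min (sigma_plus op \<sigma>1 U) (sigma_plus op \<sigma>2 V) \<le> sigma_plus op (fsum_S \<sigma>1 \<sigma>2) X"
  proof (rule sigma_plus_greatest[OF X])
    fix s
    have "min (sigma_plus op \<sigma>1 U) (sigma_plus op \<sigma>2 V) \<le> min (\<sigma>1 (act U s)) (\<sigma>2 (act V s))"
      using sigma_plus_le[OF \<sigma>D(1) U] sigma_plus_le[OF \<sigma>D(3) V] by (rule min.mono)
    also have "\<dots> \<le> fsum_S \<sigma>1 \<sigma>2 (act X s)"
      by (rule fsum_S_ge[OF \<sigma>D(2)]) (simp add: XUV act_Ladd U V)
    finally show "min (sigma_plus op \<sigma>1 U) (sigma_plus op \<sigma>2 V) \<le> fsum_S \<sigma>1 \<sigma>2 (act X s)" .
  qed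
qed

lemma has_left_unityE:
  assumes "has_left_unity op"
  obtains E where "E \<in> Fset" "\<And>a. opeval op E a = a"
proof -
  obtain X where X: "X \<in> Lset op" "\<forall>M\<in>X. \<forall>a. opeval op M a = a"
    using assms unfolding has_left_unity_def by blast
  then obtain E where E: "E \<in> Fset" "X = lclass E" by (auto simp: Lset_iff)
  then have "E \<in> X" by (simp add: mem_lclass)
  with E(1) X(2) that show ?thesis by blast
qed

end

locale gamma_semiring_left_unity = gamma_semiring op
  for op :: "'a::comm_monoid_add \<Rightarrow> 'g::comm_monoid_add \<Rightarrow> 'a \<Rightarrow> 'a" +
  fixes E :: "('a \<times> 'g) multiset"
  assumes left_unity_Fset: "E \<in> Fset"
    and left_unity: "\<And>a. opeval op E a = a"
begin

lemma Lset_decomposition: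
  assumes X: "X \<in> Lset op"
  shows "X = lclass (image_mset (\<lambda>p. (act X (fst p), snd p)) E)"
proof (rule Lset_act_inject[OF X lclass_in_Lset[OF Fset_image_mset[OF left_unity_Fset]]])
  have "act X s = (\<Sum>p\<in>#E. op (act X (fst p)) (snd p) s)" for s
  proof -
    have "act X s = act X (opeval op E s)" by (simp add: left_unity)
    also have "\<dots> = (\<Sum>p\<in>#E. act X (op (fst p) (snd p) s))"
      unfolding opeval_def by (rule act_sum_mset[OF X])
    finally show ?thesis by (simp add: act_op[OF X])
  qed
  then have "act X = (\<lambda>s. \<Sum>p\<in>#E. op (act X (fst p)) (snd p) s)" by (rule ext)
  also have "\<dots> = act (lclass (image_mset (\<lambda>p. (act X (fst p), snd p)) E))"
    by (simp add: act_lclass_image left_unity_Fset)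
  finally show "act X = act (lclass (image_mset (\<lambda>p. (act X (fst p), snd p)) E))" .
qed

lemma Lset_split_pointwise:
  assumes "X \<in> Lset op" "\<And>e. act X e = f e + g e"
  shows "X = Ladd op (lclass (image_mset (\<lambda>p. (f (fst p), snd p)) E))
                     (lclass (image_mset (\<lambda>p. (g (fst p), snd p)) E))"
proof -
  have "X = lclass (image_mset (\<lambda>p. (f (fst p) + g (fst p), snd p)) E)"
    using Lset_decomposition[OF assms(1)] by (simp only: assms(2))
  also have "\<dots> = Ladd op (lclass (image_mset (\<lambda>p. (f (fst p), snd p)) E))
                          (lclass (image_mset (\<lambda>p. (g (fst p), snd p)) E))"
    by (rule lclass_image_add[OF left_unity_Fset])
  finally show ?thesis .
qed

lemma sigma_plus_sigma_plus_inv: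
  assumes \<mu>: "fuzzy_right_ideal_L op \<mu>"
  shows "sigma_plus op (sigma_plus_inv \<mu>) = \<mu>"
proof
  fix X
  note \<mu>D = fuzzy_right_ideal_LD[OF \<mu>]
  have nonneg: "\<And>x. 0 \<le> sigma_plus_inv \<mu> x"
    using fuzzy_right_ideal_S_sigma_plus_inv[OF \<mu>] unfolding fuzzy_right_ideal_S_def by blast
  show "sigma_plus op (sigma_plus_inv \<mu>) X = \<mu> X"
  proof (cases "X \<in> Lset op")
    case X: True
    let ?t = "sigma_plus op (sigma_plus_inv \<mu>) X"
    have "\<mu> X \<le> ?t"
      by (intro sigma_plus_greatest[OF X] sigma_plus_inv_greatest)
         (simp add: gen_act X \<mu>D(6) gen_in_Lset)
    moreover have "?t \<le> \<mu> (gen (act X e) \<delta>)" for e \<delta>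
      using sigma_plus_le[OF nonneg X] sigma_plus_inv_le[OF \<mu>] by (rule order_trans)
    then have "?t \<le> \<mu> (lclass (image_mset (\<lambda>p. (act X (fst p), snd p)) E))"
      by (intro fuzzy_right_ideal_L_lclass_ge[OF \<mu>] Fset_image_mset[OF left_unity_Fset]) auto
    then have "?t \<le> \<mu> X" using Lset_decomposition[OF X, symmetric] by simp
    ultimately show ?thesis by linarith
  qed (simp add: sigma_plus_outside \<mu>D(1))
qed

lemma sigma_plus_fsum_S_le_fsum_L:
  assumes \<sigma>1: "fuzzy_right_ideal_S op \<sigma>1" and \<sigma>2: "fuzzy_right_ideal_S op \<sigma>2"
    and X: "X \<in> Lset op"
  shows "sigma_plus op (fsum_S \<sigma>1 \<sigma>2) X \<le> fsum_L op (sigma_plus op \<sigma>1) (sigma_plus op \<sigma>2) X"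
proof (rule dense_le)
  fix t assume t: "t < sigma_plus op (fsum_S \<sigma>1 \<sigma>2) X"
  have \<sigma>D: "\<And>x. 0 \<le> \<sigma>1 x" "\<And>x. \<sigma>1 x \<le> 1" "\<sigma>2 0 = 1"
    using \<sigma>1 \<sigma>2 by (auto simp: fuzzy_right_ideal_S_def)
  have "0 \<le> fsum_S \<sigma>1 \<sigma>2 x" for x
  proof -
    have "min (\<sigma>1 x) (\<sigma>2 0) \<le> fsum_S \<sigma>1 \<sigma>2 x" by (rule fsum_S_ge[OF \<sigma>D(2)]) simp
    then show ?thesis using \<sigma>D(1)[of x] \<sigma>D(3) by simp
  qed
  then have t_less: "t < fsum_S \<sigma>1 \<sigma>2 (act X e)" for e
    using t sigma_plus_le[OF _ X] by (meson order_less_le_trans)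
  moreover have "fsum_S \<sigma>1 \<sigma>2 (act X 0) \<le> 1" by (rule fsum_S_le_one) (rule \<sigma>D(2))
  ultimately have "t \<le> 1" by (meson less_le_trans less_imp_le)
  have "\<forall>e. \<exists>uv. act X e = fst uv + snd uv \<and> t < min (\<sigma>1 (fst uv)) (\<sigma>2 (snd uv))"
    using less_fsum_S_obtains[OF \<sigma>D(2) t_less] by simp
  then obtain h where h: "\<And>e. act X e = fst (h e) + snd (h e)"
      "\<And>e. t < min (\<sigma>1 (fst (h e))) (\<sigma>2 (snd (h e)))"
    by metis
  define U where "U = lclass (image_mset (\<lambda>p. (fst (h (fst p)), snd p)) E)"
  define V where "V = lclass (image_mset (\<lambda>p. (snd (h (fst p)), snd p)) E)"
  have UV: "U \<in> Lset op" "V \<in> Lset op"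
    unfolding U_def V_def by (simp_all add: lclass_in_Lset Fset_image_mset left_unity_Fset)
  have "X = Ladd op U V" unfolding U_def V_def by (rule Lset_split_pointwise[OF X h(1)])
  moreover have "t \<le> sigma_plus op \<sigma>1 U" "t \<le> sigma_plus op \<sigma>2 V"
    unfolding U_def V_def
    by (rule sigma_plus_lclass_ge[OF _ Fset_image_mset[OF left_unity_Fset] \<open>t \<le> 1\<close>],
        fact, use h(2) in \<open>force intro: less_imp_le\<close>)+
  ultimately show "t \<le> fsum_L op (sigma_plus op \<sigma>1) (sigma_plus op \<sigma>2) X"
    using fsum_L_ge[OF fuzzy_right_ideal_LD(3)[OF fuzzy_right_ideal_L_sigma_plus[OF \<sigma>1]] UV]
    by (meson min.boundedI order_trans)
qed

lemma sigma_plus_fsum_S: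
  assumes "fuzzy_right_ideal_S op \<sigma>1" "fuzzy_right_ideal_S op \<sigma>2"
  shows "sigma_plus op (fsum_S \<sigma>1 \<sigma>2) = fsum_L op (sigma_plus op \<sigma>1) (sigma_plus op \<sigma>2)"
proof
  fix X
  show "sigma_plus op (fsum_S \<sigma>1 \<sigma>2) X = fsum_L op (sigma_plus op \<sigma>1) (sigma_plus op \<sigma>2) X"
  proof (cases "X \<in> Lset op")
    case True
    then show ?thesis by (intro antisym sigma_plus_fsum_S_le_fsum_L fsum_L_le_sigma_plus_fsum_S assms)
  qed (simp add: sigma_plus_outside fsum_L_def)
qed

lemma bij_betw_sigma_plus_right_ideals:
  assumes "\<And>a. (\<Sum>p\<leftarrow>fs. op a (fst p) (snd p)) = a"
  shows "bij_betw (sigma_plus op) {\<sigma>. fuzzy_right_ideal_S op \<sigma>} {\<mu>. fuzzy_right_ideal_L op \<mu>}"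
  by (rule bij_betw_byWitness[where f' = sigma_plus_inv])
     (auto simp: sigma_plus_inv_sigma_plus[OF _ assms] sigma_plus_sigma_plus_inv
        fuzzy_right_ideal_L_sigma_plus fuzzy_right_ideal_S_sigma_plus_inv)

lemma bij_betw_sigma_plus_ideals:
  assumes "\<And>a. (\<Sum>p\<leftarrow>fs. op a (fst p) (snd p)) = a"
  shows "bij_betw (sigma_plus op) {\<sigma>. fuzzy_ideal_S op \<sigma>} {\<mu>. fuzzy_ideal_L op \<mu>}"
  by (rule bij_betw_byWitness[where f' = sigma_plus_inv])
     (auto simp: fuzzy_ideal_S_def fuzzy_ideal_L_def sigma_plus_inv_sigma_plus[OF _ assms]
        sigma_plus_sigma_plus_inv fuzzy_right_ideal_L_sigma_plus fuzzy_left_ideal_L_sigma_plus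
        fuzzy_right_ideal_S_sigma_plus_inv fuzzy_left_ideal_S_sigma_plus_inv)

lemma sigma_plus_lattice_iso:
  assumes "\<And>a. (\<Sum>p\<leftarrow>fs. op a (fst p) (snd p)) = a"
    and \<sigma>1: "fuzzy_right_ideal_S op \<sigma>1" and \<sigma>2: "fuzzy_right_ideal_S op \<sigma>2"
  shows "(\<sigma>1 \<le> \<sigma>2 \<longleftrightarrow> sigma_plus op \<sigma>1 \<le> sigma_plus op \<sigma>2) \<and>
    sigma_plus op (fsum_S \<sigma>1 \<sigma>2) = fsum_L op (sigma_plus op \<sigma>1) (sigma_plus op \<sigma>2) \<and>
    sigma_plus op (fint \<sigma>1 \<sigma>2) = fint (sigma_plus op \<sigma>1) (sigma_plus op \<sigma>2)"
proof -
  have "\<And>x. 0 \<le> \<sigma>1 x" "\<And>x. 0 \<le> \<sigma>2 x"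
    using \<sigma>1 \<sigma>2 by (simp_all add: fuzzy_right_ideal_S_def)
  then show ?thesis
    using sigma_plus_le_iff[OF assms] sigma_plus_fsum_S[OF \<sigma>1 \<sigma>2] sigma_plus_fint by blast
qed

end

theorem theorem3p4:
  fixes op :: "'a::comm_monoid_add \<Rightarrow> 'g::comm_monoid_add \<Rightarrow> 'a \<Rightarrow> 'a"
  assumes "gamma_semiring_zero op"
    and "has_left_unity op"
    and "has_right_unity op"
  shows
    "bij_betw (sigma_plus op) {\<sigma>. fuzzy_ideal_S op \<sigma>} {\<mu>. fuzzy_ideal_L op \<mu>} \<and>
     (\<forall>\<sigma>1 \<sigma>2. fuzzy_ideal_S op \<sigma>1 \<longrightarrow> fuzzy_ideal_S op \<sigma>2 \<longrightarrow>
        (\<sigma>1 \<le> \<sigma>2 \<longleftrightarrow> sigma_plus op \<sigma>1 \<le> sigma_plus op \<sigma>2) \<and>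
        sigma_plus op (fsum_S \<sigma>1 \<sigma>2) = fsum_L op (sigma_plus op \<sigma>1) (sigma_plus op \<sigma>2) \<and>
        sigma_plus op (fint \<sigma>1 \<sigma>2) = fint (sigma_plus op \<sigma>1) (sigma_plus op \<sigma>2)) \<and>
     bij_betw (sigma_plus op) {\<sigma>. fuzzy_right_ideal_S op \<sigma>} {\<mu>. fuzzy_right_ideal_L op \<mu>} \<and>
     (\<forall>\<sigma>1 \<sigma>2. fuzzy_right_ideal_S op \<sigma>1 \<longrightarrow> fuzzy_right_ideal_S op \<sigma>2 \<longrightarrow>
        (\<sigma>1 \<le> \<sigma>2 \<longleftrightarrow> sigma_plus op \<sigma>1 \<le> sigma_plus op \<sigma>2) \<and>
        sigma_plus op (fsum_S \<sigma>1 \<sigma>2) = fsum_L op (sigma_plus op \<sigma>1) (sigma_plus op \<sigma>2) \<and>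
        sigma_plus op (fint \<sigma>1 \<sigma>2) = fint (sigma_plus op \<sigma>1) (sigma_plus op \<sigma>2))"
proof -
  interpret gamma_semiring op by (rule gamma_semiring.intro) fact
  obtain E where "E \<in> Fset" "\<And>a. opeval op E a = a"
    by (metis has_left_unityE assms(2))
  then interpret gamma_semiring_left_unity op E
    by (intro gamma_semiring_left_unity.intro gamma_semiring_axioms
        gamma_semiring_left_unity_axioms.intro)
  obtain fs where fs: "\<And>a. (\<Sum>p\<leftarrow>fs. op a (fst p) (snd p)) = a"
    using assms(3) unfolding has_right_unity_def by blast
  show ?thesis
    using bij_betw_sigma_plus_ideals[OF fs] bij_betw_sigma_plus_right_ideals[OF fs]
      sigma_plus_lattice_iso[OF fs] unfolding fuzzy_ideal_S_def by blast
qed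

end
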